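(* Let $N$ be a society, $\nabla$ an ES basic fusion operator satisfying (ESF-SD), (ESF-P) and (ESF-I), and $D$ an $N$-coalition. If there exist interpretations $w\ne w'$ and $E_{w,w'},E_{w'}\in\mathcal E$ with $[\![B(E_{w,w'})]\!]=\{w,w'\}$, $[\![B(E_{w'})]\!]=\{w'\}$ such that $D$ is locally decisive for $E_{w,w'}$ against $E_{w'}$, then $D$ is a decisive $N$-coalition (i.e. decisive for $E$ against $E'$ for all $E,E'\in\mathcal E$).
   Context: Setting: epistemic space $(\mathcal E,B,\mathcal L_{\mathcal P})$ ($\mathcal E$ nonempty, $B:\mathcal E\to$ propositional formulas over finite $\mathcal P$, $|\mathcal P|\ge2$, image modulo equivalence exactly the consistent formulas; $[\![\phi]\!]$ models; $\varphi_M$ a formula with models exactly $M$); agents: well-ordered set $\mathcal S$; society: nonempty finite $N\subseteq\mathcal S$; $N$-profile $\Phi:N\to\mathcal E$, $E_i=\Phi(i)$, identified with $E_i$ if $N=\{i\}$; profiles on $\{i_1<\dots<i_n\}$, $\{j_1<\dots<j_m\}$ equivalent if $n=m$ and entries coincide position-wise. ES basic fusion operator: a map $\nabla(\Phi,E)\in\mathcal E$ with (ESF1) $B(\nabla(\Phi,E))\vdash B(E)$; (ESF2) equivalent profiles and $B(E)\equiv B(E')$ give equivalent $B(\nabla)$; (ESF3) if $B(E)\equiv B(E')\wedge B(E'')$ then $B(\nabla(\Phi,E'))\wedge B(E'')\vdash B(\nabla(\Phi,E))$; (ESF4) if moreover $B(\nabla(\Phi,E'))\wedge B(E'')\nvdash\bot$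 then $B(\nabla(\Phi,E))\vdash B(\nabla(\Phi,E'))\wedge B(E'')$. (ESF-SD): for every agent $i$, interpretations $w_1,w_2,w_3$ and $E_{w_1,w_2},E_{w_2,w_3}$ with $[\![B(E_{w_1,w_2})]\!]=\{w_1,w_2\}$, $[\![B(E_{w_2,w_3})]\!]=\{w_2,w_3\}$, there exist $i$-profiles realising each of: (i) $B(\nabla(E_i,E_{w_1,w_2}))\equiv\varphi_{w_1,w_2}$ and $B(\nabla(E_i,E_{w_2,w_3}))\equiv\varphi_{w_2,w_3}$; (ii) $\equiv\varphi_{w_1,w_2}$ and $\equiv\varphi_{w_2}$; (iii) $\equiv\varphi_{w_1}$ and $\equiv\varphi_{w_2,w_3}$; (iv) $\equiv\varphi_{w_1}$ and $\equiv\varphi_{w_2}$. (ESF-P): for every $N$, $N$-profile $\Phi$, $E,E'$: if $\bigwedge_{i\in N}B(\nabla(E_i,E))\nvdash\bot$ and $B(\nabla(E_i,E))\wedge B(E')\vdash\bot$ for all $i\in N$ then $B(\nabla(\Phi,E))\wedge B(E')\vdash\bot$. (ESF-I): for every $N$, $N$-profiles $\Phi,\Phi'$, $E$: if for every $E'$ with $B(E')\vdash B(E)$, $B(\nabla(E_j,E'))\equiv B(\nabla(E'_j,E'))$ for all $j\in N$, then $B(\nabla(\Phi,E))\equiv B(\nabla(\Phi',E))$. An $N$-coalition is a subset $D\subseteq N$. $D$ is locally decisive for $E$ against $E'$ if for every $N$-profile $\Phi$ with (i) $B(\nabla(E_i,E))\wedge B(E')\vdash\bot$ for all $i\in D$,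 (ii) $B(\nabla(E_j,E))\equiv B(E')$ for all $j\in N\setminus D$, (iii) $\bigwedge_{i\in D}B(\nabla(E_i,E))\nvdash\bot$, we have $B(\nabla(\Phi,E))\wedge B(E')\vdash\bot$. $D$ is decisive for $E$ against $E'$ if the same conclusion holds for every $N$-profile satisfying only (i) and (iii). *)

theory Defs
  imports Main
begin

datatype 'p form =
    Atom 'p
  | Bot
  | Neg "'p form"
  | Conj "'p form" "'p form"
  | Disj "'p form" "'p form"
  | Imp "'p form" "'p form"

fun sat :: "'p set \<Rightarrow> 'p form \<Rightarrow> bool" where
  "sat w (Atom p) = (p \<in> w)"
| "sat w Bot = False"
| "sat w (Neg f) = (\<not> sat w f)"
| "sat w (Conj f g) = (sat w f \<and> sat w g)"
| "sat w (Disj f g) = (sat w f \<or> sat w g)"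
| "sat w (Imp f g) = (sat w f \<longrightarrow> sat w g)"

definition models :: "'p form \<Rightarrow> 'p set set" where
  "models f = {w. sat w f}"

definition entails :: "'p form \<Rightarrow> 'p form \<Rightarrow> bool" where
  "entails f g \<longleftrightarrow> models f \<subseteq> models g"

definition fequiv :: "'p form \<Rightarrow> 'p form \<Rightarrow> bool" where
  "fequiv f g \<longleftrightarrow> entails f g \<and> entails g f"

definition consistent :: "'p form \<Rightarrow> bool" where
  "consistent f \<longleftrightarrow> \<not> entails f Bot"

definition Top :: "'p form" where
  "Top = Neg Bot"

definition bigConj :: "'p form list \<Rightarrow> 'p form" where
  "bigConj fs = foldr Conj fs Top"

definition es_space :: "('e \<Rightarrow> 'p::finite form) \<Rightarrow> bool" where
  "es_space B \<longleftrightarrow> card (UNIV :: 'p set) \<ge> 2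
     \<and> (\<forall>e. consistent (B e))
     \<and> (\<forall>f. consistent f \<longrightarrow> (\<exists>e. fequiv (B e) f))"

text \<open>An N-profile is represented by a function 'i \<Rightarrow> 'e, of which only the values on N matter.\<close>
definition society :: "'i set \<Rightarrow> bool" where
  "society N \<longleftrightarrow> finite N \<and> N \<noteq> {}"

definition equiv_profiles :: "'i::wellorder set \<Rightarrow> ('i \<Rightarrow> 'e) \<Rightarrow> 'i set \<Rightarrow> ('i \<Rightarrow> 'e) \<Rightarrow> bool" where
  "equiv_profiles N \<Phi> M \<Psi> \<longleftrightarrow>
     map \<Phi> (sorted_list_of_set N) = map \<Psi> (sorted_list_of_set M)"

text \<open>Fusion with a single-agent profile {i} \<mapsto> Ei (identified with Ei).\<close>
definition single :: "('i set \<Rightarrow> ('i \<Rightarrow> 'e) \<Rightarrow> 'e \<Rightarrow> 'e) \<Rightarrow> 'i \<Rightarrow> 'e \<Rightarrow> 'e \<Rightarrow> 'e" where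
  "single nabla i Ei E = nabla {i} (\<lambda>_. Ei) E"

definition basic_fusion ::
  "('e \<Rightarrow> 'p form) \<Rightarrow> ('i::wellorder set \<Rightarrow> ('i \<Rightarrow> 'e) \<Rightarrow> 'e \<Rightarrow> 'e) \<Rightarrow> bool" where
  "basic_fusion B nabla \<longleftrightarrow>
     (\<forall>N \<Phi> E. society N \<longrightarrow> entails (B (nabla N \<Phi> E)) (B E))
   \<and> (\<forall>N \<Phi> M \<Psi> E E'. society N \<longrightarrow> society M \<longrightarrow> equiv_profiles N \<Phi> M \<Psi>
        \<longrightarrow> fequiv (B E) (B E') \<longrightarrow> fequiv (B (nabla N \<Phi> E)) (B (nabla M \<Psi> E')))
   \<and> (\<forall>N \<Phi> E E' E''. society N \<longrightarrow> fequiv (B E) (Conj (B E') (B E''))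
        \<longrightarrow> entails (Conj (B (nabla N \<Phi> E')) (B E'')) (B (nabla N \<Phi> E)))
   \<and> (\<forall>N \<Phi> E E' E''. society N \<longrightarrow> fequiv (B E) (Conj (B E') (B E''))
        \<longrightarrow> consistent (Conj (B (nabla N \<Phi> E')) (B E''))
        \<longrightarrow> entails (B (nabla N \<Phi> E)) (Conj (B (nabla N \<Phi> E')) (B E'')))"

definition esf_sd ::
  "('e \<Rightarrow> 'p form) \<Rightarrow> ('i set \<Rightarrow> ('i \<Rightarrow> 'e) \<Rightarrow> 'e \<Rightarrow> 'e) \<Rightarrow> bool" where
  "esf_sd B nabla \<longleftrightarrow>
    (\<forall>i w1 w2 w3 E12 E23. w1 \<noteq> w2 \<longrightarrow> w2 \<noteq> w3 \<longrightarrow> w1 \<noteq> w3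
       \<longrightarrow> models (B E12) = {w1, w2} \<longrightarrow> models (B E23) = {w2, w3} \<longrightarrow>
       (\<exists>Ei. models (B (single nabla i Ei E12)) = {w1, w2}
            \<and> models (B (single nabla i Ei E23)) = {w2, w3})
     \<and> (\<exists>Ei. models (B (single nabla i Ei E12)) = {w1, w2}
            \<and> models (B (single nabla i Ei E23)) = {w2})
     \<and> (\<exists>Ei. models (B (single nabla i Ei E12)) = {w1}
            \<and> models (B (single nabla i Ei E23)) = {w2, w3})
     \<and> (\<exists>Ei. models (B (single nabla i Ei E12)) = {w1}
            \<and> models (B (single nabla i Ei E23)) = {w2}))"

definition esf_p ::
  "('e \<Rightarrow> 'p form) \<Rightarrow> ('i::wellorder set \<Rightarrow> ('i \<Rightarrow> 'e) \<Rightarrow> 'e \<Rightarrow> 'e) \<Rightarrow> bool" where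
  "esf_p B nabla \<longleftrightarrow>
    (\<forall>N \<Phi> E E'. society N \<longrightarrow>
       consistent (bigConj (map (\<lambda>i. B (single nabla i (\<Phi> i) E)) (sorted_list_of_set N)))
       \<longrightarrow> (\<forall>i\<in>N. entails (Conj (B (single nabla i (\<Phi> i) E)) (B E')) Bot)
       \<longrightarrow> entails (Conj (B (nabla N \<Phi> E)) (B E')) Bot)"

definition esf_i ::
  "('e \<Rightarrow> 'p form) \<Rightarrow> ('i set \<Rightarrow> ('i \<Rightarrow> 'e) \<Rightarrow> 'e \<Rightarrow> 'e) \<Rightarrow> bool" where
  "esf_i B nabla \<longleftrightarrow>
    (\<forall>N \<Phi> \<Phi>' E. society N \<longrightarrow>
       (\<forall>E'. entails (B E') (B E) \<longrightarrow>
          (\<forall>j\<in>N. fequiv (B (single nabla j (\<Phi> j) E')) (B (single nabla j (\<Phi>' j) E'))))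
       \<longrightarrow> fequiv (B (nabla N \<Phi> E)) (B (nabla N \<Phi>' E)))"

definition locally_decisive ::
  "('e \<Rightarrow> 'p form) \<Rightarrow> ('i::wellorder set \<Rightarrow> ('i \<Rightarrow> 'e) \<Rightarrow> 'e \<Rightarrow> 'e) \<Rightarrow> 'i set \<Rightarrow> 'i set \<Rightarrow> 'e \<Rightarrow> 'e \<Rightarrow> bool" where
  "locally_decisive B nabla N D E E' \<longleftrightarrow>
    (\<forall>\<Phi>. (\<forall>i\<in>D. entails (Conj (B (single nabla i (\<Phi> i) E)) (B E')) Bot)
       \<longrightarrow> (\<forall>j\<in>N - D. fequiv (B (single nabla j (\<Phi> j) E)) (B E'))
       \<longrightarrow> consistent (bigConj (map (\<lambda>i. B (single nabla i (\<Phi> i) E)) (sorted_list_of_set D)))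
       \<longrightarrow> entails (Conj (B (nabla N \<Phi> E)) (B E')) Bot)"

definition decisive ::
  "('e \<Rightarrow> 'p form) \<Rightarrow> ('i::wellorder set \<Rightarrow> ('i \<Rightarrow> 'e) \<Rightarrow> 'e \<Rightarrow> 'e) \<Rightarrow> 'i set \<Rightarrow> 'i set \<Rightarrow> 'e \<Rightarrow> 'e \<Rightarrow> bool" where
  "decisive B nabla N D E E' \<longleftrightarrow>
    (\<forall>\<Phi>. (\<forall>i\<in>D. entails (Conj (B (single nabla i (\<Phi> i) E)) (B E')) Bot)
       \<longrightarrow> consistent (bigConj (map (\<lambda>i. B (single nabla i (\<Phi> i) E)) (sorted_list_of_set D)))
       \<longrightarrow> entails (Conj (B (nabla N \<Phi> E)) (B E')) Bot)"

end

theory Submission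
  imports Defs
begin

text \<open>Restricting fusion to inputs whose models are two interpretations turns the operator into
  an Arrovian aggregation of pairwise choices: (ESF3) and (ESF4) make the fused models a choice
  function obeying Arrow's choice axiom, hence transitive; (ESF-P) is the weak Pareto principle and
  (ESF-I) independence of irrelevant alternatives, while (ESF-SD) lets individual attitudes on
  three interpretations be prescribed freely. The contagion argument of Arrow's theorem then
  spreads local decisiveness over one pair to decisiveness over every pair. Decisiveness for
  arbitrary \<open>E\<close>, \<open>E'\<close> follows by restricting to the pair formed by a model of \<open>E'\<close> surviving
  the fusion and a model of \<open>E\<close> kept by every member of \<open>D\<close>.\<close>

lemma models_Conj: "models (Conj f g) = models f \<inter> models g"
  by (auto simp: models_def)

lemma entails_Bot_iff: "entails f Bot \<longleftrightarrow> models f = {}"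
  by (auto simp: entails_def models_def)

lemma consistent_iff: "consistent f \<longleftrightarrow> models f \<noteq> {}"
  by (auto simp: consistent_def entails_def models_def)

lemma fequiv_iff: "fequiv f g \<longleftrightarrow> models f = models g"
  by (auto simp: fequiv_def entails_def)

lemma models_bigConj: "models (bigConj (map g xs)) = (\<Inter>x\<in>set xs. models (g x))"
  by (induction xs) (auto simp: bigConj_def models_def Top_def)

definition minterm :: "'p::finite set \<Rightarrow> 'p form" where
  "minterm w = foldr (\<lambda>p f. Conj (if p \<in> w then Atom p else Neg (Atom p)) f)
                 (SOME ps. set ps = UNIV) Top"

lemma sat_minterm: "sat v (minterm w) \<longleftrightarrow> v = w"
proof -
  have foldr: "sat v (foldr (\<lambda>p f. Conj (if p \<in> w then Atom p else Neg (Atom p)) f) ps Top)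
      \<longleftrightarrow> (\<forall>p\<in>set ps. p \<in> v \<longleftrightarrow> p \<in> w)" for ps
    by (induction ps) (auto simp: Top_def)
  have "set (SOME ps. set ps = (UNIV :: 'p::finite set)) = UNIV"
    by (rule someI_ex) (rule finite_list, simp)
  then show ?thesis by (auto simp: minterm_def foldr)
qed

definition dnf :: "'p::finite set set \<Rightarrow> 'p form" where
  "dnf X = foldr (\<lambda>w f. Disj (minterm w) f) (SOME ws. set ws = X) Bot"

lemma models_dnf: "models (dnf (X :: 'p::finite set set)) = X"
proof -
  have foldr: "sat v (foldr (\<lambda>w f. Disj (minterm w) f) ws Bot) \<longleftrightarrow> v \<in> set ws"
    for v and ws :: "'p set list"
    by (induction ws) (auto simp: sat_minterm)
  have "set (SOME ws. set ws = X) = X"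
    by (rule someI_ex) (rule finite_list, simp)
  then show ?thesis by (auto simp: models_def dnf_def foldr)
qed

lemma ex_third_interpretation:
  assumes "card (UNIV :: 'p::finite set) \<ge> 2"
  shows "\<exists>z :: 'p set. z \<noteq> a \<and> z \<noteq> b"
proof (rule ccontr)
  assume "\<not> ?thesis"
  then have "card (UNIV :: 'p set set) \<le> card {a, b}"
    by (intro card_mono) auto
  also have "\<dots> \<le> 2" by (simp add: card_insert_if)
  also have "\<dots> \<le> card (UNIV :: 'p set)" by (rule assms)
  also have "\<dots> < 2 ^ card (UNIV :: 'p set)" by (rule less_exp)
  also have "\<dots> = card (UNIV :: 'p set set)"
    by (metis Pow_UNIV card_Pow finite)
  finally show False by simp
qed

definition arrow_choice_on :: "('a set \<Rightarrow> 'a set) \<Rightarrow> 'a set \<Rightarrow> bool" where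
  "arrow_choice_on f Y \<longleftrightarrow>
     f Y \<subseteq> Y \<and> f Y \<noteq> {} \<and> (\<forall>X\<subseteq>Y. f Y \<inter> X \<noteq> {} \<longrightarrow> f X = f Y \<inter> X)"

lemma arrow_choice_onD:
  assumes "arrow_choice_on f Y"
  shows "f Y \<subseteq> Y" "f Y \<noteq> {}" "X \<subseteq> Y \<Longrightarrow> f Y \<inter> X \<noteq> {} \<Longrightarrow> f X = f Y \<inter> X"
  using assms unfolding arrow_choice_on_def by blast+

lemma arrow_choice_strict_weak_trans:
  assumes f: "arrow_choice_on f {a, b, z}" and d: "a \<noteq> b" "b \<noteq> z" "a \<noteq> z"
    and ab: "f {a, b} = {a}" and bz: "b \<in> f {b, z}"
  shows "f {a, z} = {a}"
proof -
  let ?T = "f {a, b, z}"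
  note restr = arrow_choice_onD(3)[OF f]
  have b: "b \<notin> ?T"
  proof
    assume "b \<in> ?T"
    then have "f {a, b} = ?T \<inter> {a, b}" by (intro restr) auto
    then have "?T \<inter> {a, b} = {a}" using ab by (rule subst)
    moreover have "b \<in> ?T \<inter> {a, b}" using \<open>b \<in> ?T\<close> by simp
    ultimately show False using d by simp
  qed
  have z: "z \<notin> ?T"
  proof
    assume "z \<in> ?T"
    then have "f {b, z} = ?T \<inter> {b, z}" by (intro restr) auto
    with bz have "b \<in> ?T \<inter> {b, z}" by simp
    with b show False by simp
  qed
  have "?T \<subseteq> {a, b, z}" "?T \<noteq> {}" using arrow_choice_onD(1,2)[OF f] by simp_all
  with b z have a: "a \<in> ?T" by auto
  then have "f {a, z} = ?T \<inter> {a, z}" by (intro restr) auto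
  also have "\<dots> = {a}" using a z by auto
  finally show ?thesis .
qed

lemma arrow_choice_weak_strict_trans:
  assumes f: "arrow_choice_on f {a, b, z}" and d: "a \<noteq> b" "b \<noteq> z" "a \<noteq> z"
    and ab: "a \<in> f {a, b}" and bz: "f {b, z} = {b}"
  shows "f {a, z} = {a}"
proof -
  let ?T = "f {a, b, z}"
  note restr = arrow_choice_onD(3)[OF f]
  have z: "z \<notin> ?T"
  proof
    assume "z \<in> ?T"
    then have "f {b, z} = ?T \<inter> {b, z}" by (intro restr) auto
    then have "?T \<inter> {b, z} = {b}" using bz by (rule subst)
    moreover have "z \<in> ?T \<inter> {b, z}" using \<open>z \<in> ?T\<close> by simp
    ultimately show False using d by simp
  qed
  have a: "a \<in> ?T"
  proof (rule ccontr)
    assume "a \<notin> ?T"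
    moreover have "?T \<subseteq> {a, b, z}" "?T \<noteq> {}" using arrow_choice_onD(1,2)[OF f] by simp_all
    ultimately have "b \<in> ?T" using z by auto
    then have "f {a, b} = ?T \<inter> {a, b}" by (intro restr) auto
    with ab have "a \<in> ?T \<inter> {a, b}" by simp
    with \<open>a \<notin> ?T\<close> show False by simp
  qed
  then have "f {a, z} = ?T \<inter> {a, z}" by (intro restr) auto
  also have "\<dots> = {a}" using a z by auto
  finally show ?thesis .
qed

lemma arrow_choice_pair_cases:
  assumes "arrow_choice_on f {a, b}"
  obtains "f {a, b} = {a}" | "f {a, b} = {b}" | "f {a, b} = {a, b}"
proof -
  have "f {a, b} \<subseteq> {a, b}" "f {a, b} \<noteq> {}"
    using arrow_choice_onD(1,2)[OF assms] by simp_all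
  then show thesis using that by blast
qed

locale fusion_setting =
  fixes B :: "'e \<Rightarrow> 'p::finite form"
    and nabla :: "'i::wellorder set \<Rightarrow> ('i \<Rightarrow> 'e) \<Rightarrow> 'e \<Rightarrow> 'e"
    and N D :: "'i set"
  assumes es_space: "es_space B" and basic_fusion: "basic_fusion B nabla"
    and esf_sd: "esf_sd B nabla" and esf_p: "esf_p B nabla" and esf_i: "esf_i B nabla"
    and society: "society N" and coalition: "D \<subseteq> N"
begin

lemma models_B_nonempty: "models (B e) \<noteq> {}"
  using es_space by (simp add: es_space_def consistent_iff)

lemma ex_models_B_eq: "X \<noteq> {} \<Longrightarrow> \<exists>e. models (B e) = X"
  using es_space models_dnf[of X] unfolding es_space_def consistent_iff fequiv_iff by metis

definition rep :: "'p set set \<Rightarrow> 'e" where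
  "rep X = (SOME e. models (B e) = X)"

lemma models_rep: "X \<noteq> {} \<Longrightarrow> models (B (rep X)) = X"
  unfolding rep_def by (rule someI_ex) (rule ex_models_B_eq)

text \<open>By (ESF2) the models of a fusion depend on the input only through its models, so fusion
  is a function of nonempty sets of interpretations.\<close>

definition fused :: "'i set \<Rightarrow> ('i \<Rightarrow> 'e) \<Rightarrow> 'p set set \<Rightarrow> 'p set set" where
  "fused S \<Phi> X = models (B (nabla S \<Phi> (rep X)))"

definition indiv :: "'i \<Rightarrow> 'e \<Rightarrow> 'p set set \<Rightarrow> 'p set set" where
  "indiv i e = fused {i} (\<lambda>_. e)"

lemma society_singleton: "society {i}"
  by (simp add: society_def)

lemma models_nabla:
  assumes S: "society S" and E: "models (B E) = X"
  shows "models (B (nabla S \<Phi> E)) = fused S \<Phi> X"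
proof -
  have "X \<noteq> {}" using E models_B_nonempty by blast
  with E have "fequiv (B E) (B (rep X))" by (simp add: fequiv_iff models_rep)
  moreover have "equiv_profiles S \<Phi> S \<Phi>" by (simp add: equiv_profiles_def)
  ultimately have "fequiv (B (nabla S \<Phi> E)) (B (nabla S \<Phi> (rep X)))"
    using basic_fusion S unfolding basic_fusion_def by blast
  then show ?thesis by (simp add: fequiv_iff fused_def)
qed

lemma models_single: "models (B E) = X \<Longrightarrow> models (B (single nabla i e E)) = indiv i e X"
  unfolding single_def indiv_def by (rule models_nabla[OF society_singleton])

lemma arrow_choice_fused:
  assumes S: "society S" and Y: "Y \<noteq> {}"
  shows "arrow_choice_on (fused S \<Phi>) Y"
  unfolding arrow_choice_on_def
proof (intro conjI allI impI)
  show "fused S \<Phi> Y \<subseteq> Y"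
    using basic_fusion S models_rep[OF Y] unfolding basic_fusion_def fused_def entails_def by metis
  show "fused S \<Phi> Y \<noteq> {}"
    unfolding fused_def by (rule models_B_nonempty)
next
  fix X assume XY: "X \<subseteq> Y" and meets: "fused S \<Phi> Y \<inter> X \<noteq> {}"
  then have X: "X \<noteq> {}" by blast
  have conj: "fequiv (B (rep X)) (Conj (B (rep Y)) (B (rep X)))"
    using models_rep[OF X] models_rep[OF Y] XY by (auto simp: fequiv_iff models_Conj)
  have "consistent (Conj (B (nabla S \<Phi> (rep Y))) (B (rep X)))"
    using meets models_rep[OF X] by (simp add: consistent_iff models_Conj fused_def)
  with conj S basic_fusion
  have "fequiv (B (nabla S \<Phi> (rep X))) (Conj (B (nabla S \<Phi> (rep Y))) (B (rep X)))"
    unfolding basic_fusion_def fequiv_def by blast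
  then show "fused S \<Phi> X = fused S \<Phi> Y \<inter> X"
    using models_rep[OF X] by (simp add: fequiv_iff models_Conj fused_def)
qed

lemma arrow_choice_indiv: "Y \<noteq> {} \<Longrightarrow> arrow_choice_on (indiv i e) Y"
  unfolding indiv_def by (rule arrow_choice_fused[OF society_singleton])

lemma indiv_sd:
  assumes "w1 \<noteq> w2" "w2 \<noteq> w3" "w1 \<noteq> w3"
  shows "\<exists>e. indiv i e {w1, w2} = {w1, w2} \<and> indiv i e {w2, w3} = {w2}"
    and "\<exists>e. indiv i e {w1, w2} = {w1} \<and> indiv i e {w2, w3} = {w2, w3}"
    and "\<exists>e. indiv i e {w1, w2} = {w1} \<and> indiv i e {w2, w3} = {w2}"
proof -
  have m12: "models (B (rep {w1, w2})) = {w1, w2}" and m23: "models (B (rep {w2, w3})) = {w2, w3}"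
    by (simp_all add: models_rep)
  note sd = esf_sd[unfolded esf_sd_def, rule_format, OF assms m12 m23, of i]
  show "\<exists>e. indiv i e {w1, w2} = {w1, w2} \<and> indiv i e {w2, w3} = {w2}"
    and "\<exists>e. indiv i e {w1, w2} = {w1} \<and> indiv i e {w2, w3} = {w2, w3}"
    and "\<exists>e. indiv i e {w1, w2} = {w1} \<and> indiv i e {w2, w3} = {w2}"
    using sd unfolding models_single[OF m12] models_single[OF m23] by blast+
qed

lemma indiv_pair_cases:
  obtains (left) "indiv i e {a, b} = {a}" | (right) "indiv i e {a, b} = {b}"
    | (both) "indiv i e {a, b} = {a, b}"
  by (rule arrow_choice_pair_cases[OF arrow_choice_indiv]) simp_all

lemma indiv_strict_weak_trans:
  "a \<noteq> b \<Longrightarrow> b \<noteq> z \<Longrightarrow> a \<noteq> z \<Longrightarrow> indiv i e {a, b} = {a} \<Longrightarrow> b \<in> indiv i e {b, z}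
    \<Longrightarrow> indiv i e {a, z} = {a}"
  by (rule arrow_choice_strict_weak_trans[OF arrow_choice_indiv]) simp_all

lemma indiv_weak_strict_trans:
  "a \<noteq> b \<Longrightarrow> b \<noteq> z \<Longrightarrow> a \<noteq> z \<Longrightarrow> a \<in> indiv i e {a, b} \<Longrightarrow> indiv i e {b, z} = {b}
    \<Longrightarrow> indiv i e {a, z} = {a}"
  by (rule arrow_choice_weak_strict_trans[OF arrow_choice_indiv]) simp_all

lemma indiv_place_top:
  assumes "a \<noteq> b" "d \<noteq> a" "d \<noteq> b"
  shows "\<exists>e. indiv i e {a, b} = indiv i e0 {a, b} \<and> indiv i e {d, a} = {d} \<and> indiv i e {d, b} = {d}"
proof (cases rule: indiv_pair_cases[of i e0 a b])
  case left
  obtain e where da: "indiv i e {d, a} = {d}" and ab: "indiv i e {a, b} = {a}"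
    using indiv_sd(3)[of d a b i] assms by blast
  have "indiv i e {d, b} = {d}" using indiv_strict_weak_trans[OF _ _ _ da] ab assms by simp
  with da ab left show ?thesis by (intro exI[of _ e]) simp
next
  case right
  obtain e where db: "indiv i e {d, b} = {d}" and ba: "indiv i e {b, a} = {b}"
    using indiv_sd(3)[of d b a i] assms by blast
  have "indiv i e {d, a} = {d}" using indiv_strict_weak_trans[OF _ _ _ db] ba assms by simp
  with db ba right show ?thesis by (intro exI[of _ e]) (simp add: insert_commute)
next
  case both
  obtain e where da: "indiv i e {d, a} = {d}" and ab: "indiv i e {a, b} = {a, b}"
    using indiv_sd(2)[of d a b i] assms by blast
  have "indiv i e {d, b} = {d}" using indiv_strict_weak_trans[OF _ _ _ da] ab assms by simp
  with da ab both show ?thesis by (intro exI[of _ e]) simp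
qed

lemma indiv_place_bottom:
  assumes "a \<noteq> b" "d \<noteq> a" "d \<noteq> b"
  shows "\<exists>e. indiv i e {a, b} = indiv i e0 {a, b} \<and> indiv i e {a, d} = {a} \<and> indiv i e {b, d} = {b}"
proof (cases rule: indiv_pair_cases[of i e0 a b])
  case left
  obtain e where ab: "indiv i e {a, b} = {a}" and bd: "indiv i e {b, d} = {b}"
    using indiv_sd(3)[of a b d i] assms by blast
  have "indiv i e {a, d} = {a}" using indiv_weak_strict_trans[OF _ _ _ _ bd] ab assms by simp
  with ab bd left show ?thesis by (intro exI[of _ e]) simp
next
  case right
  obtain e where ba: "indiv i e {b, a} = {b}" and ad: "indiv i e {a, d} = {a}"
    using indiv_sd(3)[of b a d i] assms by blast
  have "indiv i e {b, d} = {b}" using indiv_weak_strict_trans[OF _ _ _ _ ad] ba assms by simp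
  with ba ad right show ?thesis by (intro exI[of _ e]) (simp add: insert_commute)
next
  case both
  obtain e where ab: "indiv i e {a, b} = {a, b}" and bd: "indiv i e {b, d} = {b}"
    using indiv_sd(1)[of a b d i] assms by blast
  have "indiv i e {a, d} = {a}" using indiv_weak_strict_trans[OF _ _ _ _ bd] ab assms by simp
  with ab bd both show ?thesis by (intro exI[of _ e]) simp
qed

lemma indiv_place_between:
  assumes "a \<noteq> b" "d \<noteq> a" "d \<noteq> b"
  shows "\<exists>e. indiv i e {a, b} = {a} \<and> indiv i e {a, d} = {a} \<and> indiv i e {d, b} = {d}"
proof -
  obtain e where ad: "indiv i e {a, d} = {a}" and db: "indiv i e {d, b} = {d}"
    using indiv_sd(3)[of a d b i] assms by blast
  have "indiv i e {a, b} = {a}" using indiv_strict_weak_trans[OF _ _ _ ad] db assms by simp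
  with ad db show ?thesis by (intro exI[of _ e]) simp
qed

lemma fused_singleton: "society S \<Longrightarrow> fused S \<Phi> {u} = {u}"
  using arrow_choice_onD(1,2)[OF arrow_choice_fused, of S "{u}" \<Phi>] by auto

lemma fused_pareto:
  assumes ab: "a \<noteq> b" and unanimous: "\<forall>i\<in>N. indiv i (\<Phi> i) {a, b} = {a}"
  shows "fused N \<Phi> {a, b} = {a}"
proof -
  have mab: "models (B (rep {a, b})) = {a, b}" and mb: "models (B (rep {b})) = {b}"
    by (simp_all add: models_rep)
  note indiv = models_single[OF mab]
  have N: "finite N" "N \<noteq> {}" using society by (simp_all add: society_def)
  then have "a \<in> (\<Inter>i\<in>N. indiv i (\<Phi> i) {a, b})" using unanimous by simp
  with N have "consistent (bigConj (map (\<lambda>i. B (single nabla i (\<Phi> i) (rep {a, b})))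
      (sorted_list_of_set N)))"
    by (auto simp: consistent_iff models_bigConj indiv)
  moreover have "\<forall>i\<in>N. entails (Conj (B (single nabla i (\<Phi> i) (rep {a, b}))) (B (rep {b}))) Bot"
    using unanimous ab by (simp add: entails_Bot_iff models_Conj indiv mb)
  ultimately have "entails (Conj (B (nabla N \<Phi> (rep {a, b}))) (B (rep {b}))) Bot"
    using esf_p society unfolding esf_p_def by blast
  then have "fused N \<Phi> {a, b} \<inter> {b} = {}"
    by (simp add: entails_Bot_iff models_Conj mb fused_def)
  moreover have "fused N \<Phi> {a, b} \<subseteq> {a, b}" "fused N \<Phi> {a, b} \<noteq> {}"
    using arrow_choice_onD(1,2)[OF arrow_choice_fused[OF society]] by simp_all
  ultimately show ?thesis by auto
qed

lemma fused_iia: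
  assumes agree: "\<forall>j\<in>N. indiv j (\<Phi> j) {a, b} = indiv j (\<Phi>' j) {a, b}"
  shows "fused N \<Phi> {a, b} = fused N \<Phi>' {a, b}"
proof -
  have mab: "models (B (rep {a, b})) = {a, b}" by (simp add: models_rep)
  have "fequiv (B (single nabla j (\<Phi> j) E)) (B (single nabla j (\<Phi>' j) E))"
    if "entails (B E) (B (rep {a, b}))" and j: "j \<in> N" for E j
  proof -
    define X where "X = models (B E)"
    have "X \<subseteq> {a, b}" "X \<noteq> {}"
      using that mab models_B_nonempty by (simp_all add: entails_def X_def)
    then consider "X = {a}" | "X = {b}" | "X = {a, b}" by blast
    then have "indiv j (\<Phi> j) X = indiv j (\<Phi>' j) X"
      by cases (simp_all add: indiv_def fused_singleton society_singleton agree[rule_format, OF j,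
            unfolded indiv_def])
    then show ?thesis by (simp add: fequiv_iff models_single X_def)
  qed
  then have "fequiv (B (nabla N \<Phi> (rep {a, b}))) (B (nabla N \<Phi>' (rep {a, b})))"
    using esf_i society unfolding esf_i_def by blast
  then show ?thesis by (simp add: fequiv_iff fused_def)
qed

text \<open>(Local) decisiveness for an input with models \<open>{a, b}\<close> against one with models \<open>{b}\<close>;
  condition (iii) is dropped since it holds automatically when every member of \<open>D\<close> keeps \<open>{a}\<close>.\<close>

definition pair_locally_decisive :: "'p set \<Rightarrow> 'p set \<Rightarrow> bool" where
  "pair_locally_decisive a b \<longleftrightarrow> (\<forall>\<Phi>. (\<forall>i\<in>D. indiv i (\<Phi> i) {a, b} = {a})
     \<longrightarrow> (\<forall>j\<in>N - D. indiv j (\<Phi> j) {a, b} = {b}) \<longrightarrow> fused N \<Phi> {a, b} = {a})"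

definition pair_decisive :: "'p set \<Rightarrow> 'p set \<Rightarrow> bool" where
  "pair_decisive a b \<longleftrightarrow> (\<forall>\<Phi>. (\<forall>i\<in>D. indiv i (\<Phi> i) {a, b} = {a}) \<longrightarrow> fused N \<Phi> {a, b} = {a})"

lemma pair_decisive_imp_locally: "pair_decisive a b \<Longrightarrow> pair_locally_decisive a b"
  by (simp add: pair_decisive_def pair_locally_decisive_def)

lemma pair_decisive_same_winner:
  assumes LD: "pair_locally_decisive x y" and d: "x \<noteq> y" "z \<noteq> x" "z \<noteq> y"
  shows "pair_decisive x z"
  unfolding pair_decisive_def
proof (intro allI impI)
  fix \<Phi> assume hD: "\<forall>i\<in>D. indiv i (\<Phi> i) {x, z} = {x}"
  have "\<exists>e. indiv i e {x, z} = indiv i (\<Phi> i) {x, z} \<and> indiv i e {y, z} = {y}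
      \<and> (i \<in> D \<longrightarrow> indiv i e {x, y} = {x}) \<and> (i \<notin> D \<longrightarrow> indiv i e {y, x} = {y})" for i
  proof (cases "i \<in> D")
    case True
    obtain e where "indiv i e {x, z} = {x}" "indiv i e {x, y} = {x}" "indiv i e {y, z} = {y}"
      using indiv_place_between[of x z y i] d by blast
    with True hD show ?thesis by (intro exI[of _ e]) simp
  next
    case False
    obtain e where "indiv i e {x, z} = indiv i (\<Phi> i) {x, z}" "indiv i e {y, x} = {y}"
      "indiv i e {y, z} = {y}"
      using indiv_place_top[of x z y i "\<Phi> i"] d by blast
    with False show ?thesis by (intro exI[of _ e]) simp
  qed
  from choice[OF allI[OF this]] obtain \<Phi>' where \<Phi>': "\<forall>i.
      indiv i (\<Phi>' i) {x, z} = indiv i (\<Phi> i) {x, z} \<and> indiv i (\<Phi>' i) {y, z} = {y}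
      \<and> (i \<in> D \<longrightarrow> indiv i (\<Phi>' i) {x, y} = {x}) \<and> (i \<notin> D \<longrightarrow> indiv i (\<Phi>' i) {y, x} = {y})" ..
  have "fused N \<Phi>' {x, y} = {x}"
    using LD \<Phi>' unfolding pair_locally_decisive_def by (simp add: insert_commute)
  moreover have "fused N \<Phi>' {y, z} = {y}"
    using fused_pareto[of y z \<Phi>'] \<Phi>' d by simp
  ultimately have "fused N \<Phi>' {x, z} = {x}"
    using arrow_choice_strict_weak_trans[OF arrow_choice_fused[OF society]] d by simp
  moreover have "fused N \<Phi> {x, z} = fused N \<Phi>' {x, z}"
    using fused_iia \<Phi>' by simp
  ultimately show "fused N \<Phi> {x, z} = {x}" by simp
qed

lemma pair_decisive_same_loser:
  assumes LD: "pair_locally_decisive x y" and d: "x \<noteq> y" "z \<noteq> x" "z \<noteq> y"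
  shows "pair_decisive z y"
  unfolding pair_decisive_def
proof (intro allI impI)
  fix \<Phi> assume hD: "\<forall>i\<in>D. indiv i (\<Phi> i) {z, y} = {z}"
  have "\<exists>e. indiv i e {z, y} = indiv i (\<Phi> i) {z, y} \<and> indiv i e {z, x} = {z}
      \<and> (i \<in> D \<longrightarrow> indiv i e {x, y} = {x}) \<and> (i \<notin> D \<longrightarrow> indiv i e {y, x} = {y})" for i
  proof (cases "i \<in> D")
    case True
    obtain e where "indiv i e {z, y} = {z}" "indiv i e {z, x} = {z}" "indiv i e {x, y} = {x}"
      using indiv_place_between[of z y x i] d by blast
    with True hD show ?thesis by (intro exI[of _ e]) simp
  next
    case False
    obtain e where "indiv i e {z, y} = indiv i (\<Phi> i) {z, y}" "indiv i e {z, x} = {z}"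
      "indiv i e {y, x} = {y}"
      using indiv_place_bottom[of z y x i "\<Phi> i"] d by blast
    with False show ?thesis by (intro exI[of _ e]) simp
  qed
  from choice[OF allI[OF this]] obtain \<Phi>' where \<Phi>': "\<forall>i.
      indiv i (\<Phi>' i) {z, y} = indiv i (\<Phi> i) {z, y} \<and> indiv i (\<Phi>' i) {z, x} = {z}
      \<and> (i \<in> D \<longrightarrow> indiv i (\<Phi>' i) {x, y} = {x}) \<and> (i \<notin> D \<longrightarrow> indiv i (\<Phi>' i) {y, x} = {y})" ..
  have "fused N \<Phi>' {x, y} = {x}"
    using LD \<Phi>' unfolding pair_locally_decisive_def by (simp add: insert_commute)
  moreover have "fused N \<Phi>' {z, x} = {z}"
    using fused_pareto[of z x \<Phi>'] \<Phi>' d by simp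
  ultimately have "fused N \<Phi>' {z, y} = {z}"
    using arrow_choice_weak_strict_trans[OF arrow_choice_fused[OF society]] d by simp
  moreover have "fused N \<Phi> {z, y} = fused N \<Phi>' {z, y}"
    using fused_iia \<Phi>' by simp
  ultimately show "fused N \<Phi> {z, y} = {z}" by simp
qed

lemma ex_third: "\<exists>z :: 'p set. z \<noteq> a \<and> z \<noteq> b"
  using es_space unfolding es_space_def by (intro ex_third_interpretation) simp

lemma pair_decisive_all_pairs:
  assumes LD: "pair_locally_decisive x y" and xy: "x \<noteq> y" and uv: "u \<noteq> v"
  shows "pair_decisive u v"
proof -
  have from_x: "pair_decisive x v" if vx: "v \<noteq> x" for v
  proof (cases "v = y")
    case True
    obtain z where z: "z \<noteq> x" "z \<noteq> y" using ex_third[of x y] by blast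
    have "pair_decisive x z" using LD xy z by (rule pair_decisive_same_winner)
    then have "pair_decisive x y"
      using pair_decisive_same_winner[of x z y] pair_decisive_imp_locally z xy by simp
    with True show ?thesis by simp
  next
    case False
    show ?thesis using LD xy vx False by (rule pair_decisive_same_winner)
  qed
  have to_not_x: "pair_decisive u v" if uv: "u \<noteq> v" and vx: "v \<noteq> x" for u v
  proof (cases "u = x")
    case True
    with vx show ?thesis by (simp add: from_x)
  next
    case False
    have "pair_locally_decisive x v" using from_x[OF vx] by (rule pair_decisive_imp_locally)
    then show ?thesis using pair_decisive_same_loser[of x v u] vx False uv by simp
  qed
  show ?thesis
  proof (cases "v = x")
    case True
    obtain z where z: "z \<noteq> u" "z \<noteq> x" using ex_third[of u x] by blast
    have "pair_locally_decisive u z"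
      using to_not_x[of u z] z by (simp add: pair_decisive_imp_locally)
    then show ?thesis using pair_decisive_same_winner[of u z x] z uv True by simp
  next
    case False
    with uv show ?thesis by (rule to_not_x)
  qed
qed

lemma pair_locally_decisive_if_locally_decisive:
  assumes d: "w \<noteq> w'" and mww': "models (B Eww') = {w, w'}" and mw': "models (B Ew') = {w'}"
    and LD: "locally_decisive B nabla N D Eww' Ew'"
  shows "pair_locally_decisive w w'"
  unfolding pair_locally_decisive_def
proof (intro allI impI)
  fix \<Phi>
  assume hD: "\<forall>i\<in>D. indiv i (\<Phi> i) {w, w'} = {w}"
    and hO: "\<forall>j\<in>N - D. indiv j (\<Phi> j) {w, w'} = {w'}"
  note indiv = models_single[OF mww']
  have "finite D" using society coalition finite_subset by (auto simp: society_def)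
  with hD have "consistent (bigConj (map (\<lambda>i. B (single nabla i (\<Phi> i) Eww')) (sorted_list_of_set D)))"
    by (auto simp: consistent_iff models_bigConj indiv)
  moreover have "\<forall>i\<in>D. entails (Conj (B (single nabla i (\<Phi> i) Eww')) (B Ew')) Bot"
    using hD d by (simp add: entails_Bot_iff models_Conj indiv mw')
  moreover have "\<forall>j\<in>N - D. fequiv (B (single nabla j (\<Phi> j) Eww')) (B Ew')"
    using hO by (simp add: fequiv_iff indiv mw')
  ultimately have "entails (Conj (B (nabla N \<Phi> Eww')) (B Ew')) Bot"
    using LD unfolding locally_decisive_def by blast
  then have "fused N \<Phi> {w, w'} \<inter> {w'} = {}"
    by (simp add: entails_Bot_iff models_Conj mw' models_nabla[OF society mww'])
  moreover have "fused N \<Phi> {w, w'} \<subseteq> {w, w'}" "fused N \<Phi> {w, w'} \<noteq> {}"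
    using arrow_choice_onD(1,2)[OF arrow_choice_fused[OF society]] by simp_all
  ultimately show "fused N \<Phi> {w, w'} = {w}" by auto
qed

lemma coalition_nonempty:
  assumes all_pairs: "\<And>u v. u \<noteq> v \<Longrightarrow> pair_decisive u v"
  shows "D \<noteq> {}"
proof
  assume D: "D = {}"
  obtain a :: "'p set" where a: "a \<noteq> {}" using ex_third[of "{}" "{}"] by blast
  have "fused N \<Phi> {a, {}} = {a}" "fused N \<Phi> {{}, a} = {{}}" for \<Phi>
    using all_pairs[OF a] all_pairs[OF a[symmetric]] D unfolding pair_decisive_def by simp_all
  with a show False by (metis insert_commute singleton_inject)
qed

lemma decisive_if_all_pairs_decisive:
  assumes all_pairs: "\<And>u v. u \<noteq> v \<Longrightarrow> pair_decisive u v"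
  shows "decisive B nabla N D E E'"
  unfolding decisive_def
proof (intro allI impI)
  fix \<Phi>
  assume excl: "\<forall>i\<in>D. entails (Conj (B (single nabla i (\<Phi> i) E)) (B E')) Bot"
    and cons: "consistent (bigConj (map (\<lambda>i. B (single nabla i (\<Phi> i) E)) (sorted_list_of_set D)))"
  define X where "X = models (B E)"
  have X: "X \<noteq> {}" using models_B_nonempty X_def by simp
  note indiv = models_single[OF X_def[symmetric]] and fused = models_nabla[OF society X_def[symmetric]]
  have "finite D" using society coalition finite_subset by (auto simp: society_def)
  with cons obtain u where u: "\<forall>i\<in>D. u \<in> indiv i (\<Phi> i) X"
    by (auto simp: consistent_iff models_bigConj indiv)
  have disj: "\<forall>i\<in>D. indiv i (\<Phi> i) X \<inter> models (B E') = {}"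
    using excl by (simp add: entails_Bot_iff models_Conj indiv)
  obtain i0 where i0: "i0 \<in> D" using coalition_nonempty[OF all_pairs] by blast
  have uX: "u \<in> X" and uE': "u \<notin> models (B E')"
    using u disj i0 arrow_choice_onD(1)[OF arrow_choice_indiv[OF X]] by blast+
  show "entails (Conj (B (nabla N \<Phi> E)) (B E')) Bot"
  proof (rule ccontr)
    assume "\<not> ?thesis"
    then obtain v where vN: "v \<in> fused N \<Phi> X" and vE': "v \<in> models (B E')"
      by (auto simp: entails_Bot_iff models_Conj fused)
    have uv: "u \<noteq> v" using uE' vE' by blast
    have vX: "v \<in> X" using vN arrow_choice_onD(1)[OF arrow_choice_fused[OF society X]] by blast
    have "indiv i (\<Phi> i) {u, v} = {u}" if i: "i \<in> D" for i
    proof -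
      have "indiv i (\<Phi> i) {u, v} = indiv i (\<Phi> i) X \<inter> {u, v}"
        using u i uX vX by (intro arrow_choice_onD(3)[OF arrow_choice_indiv[OF X]]) auto
      also have "\<dots> = {u}" using u i disj vE' by auto
      finally show ?thesis .
    qed
    then have "fused N \<Phi> {u, v} = {u}" using all_pairs[OF uv] by (simp add: pair_decisive_def)
    moreover have "fused N \<Phi> {u, v} = fused N \<Phi> X \<inter> {u, v}"
      using vN uX vX by (intro arrow_choice_onD(3)[OF arrow_choice_fused[OF society X]]) auto
    ultimately show False using vN uv by auto
  qed
qed

end

theorem theorem5:
  fixes B :: "'e \<Rightarrow> 'p::finite form"
    and nabla :: "'i::wellorder set \<Rightarrow> ('i \<Rightarrow> 'e) \<Rightarrow> 'e \<Rightarrow> 'e"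
    and N D :: "'i set"
    and w w' :: "'p set"
    and Eww' Ew' :: 'e
  assumes "es_space B"
    and "basic_fusion B nabla"
    and "esf_sd B nabla"
    and "esf_p B nabla"
    and "esf_i B nabla"
    and "society N"
    and "D \<subseteq> N"
    and "w \<noteq> w'"
    and "models (B Eww') = {w, w'}"
    and "models (B Ew') = {w'}"
    and "locally_decisive B nabla N D Eww' Ew'"
  shows "\<forall>E E'. decisive B nabla N D E E'"
proof -
  interpret fusion_setting B nabla N D
    using assms(1-7) by unfold_locales
  have "pair_locally_decisive w w'"
    using assms(8-11) by (rule pair_locally_decisive_if_locally_decisive)
  then have "pair_decisive u v" if "u \<noteq> v" for u v
    using pair_decisive_all_pairs assms(8) that by blast
  then show ?thesis by (blast intro: decisive_if_all_pairs_decisive)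
qed

end
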